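(* Let $X$ be a compact metric space and $F\colon X\to 2^X$ a set-valued mapping with the specification property. Then the shift map $\sigma\colon\varprojlim F\to\varprojlim F$ has the specification property (as a single-valued continuous map on the compact metric space $\varprojlim F$).
   Context: $d$ is the metric on $X$; $2^X$ is the space of nonempty closed subsets of $X$; a set-valued mapping is an upper semicontinuous $F\colon X\to 2^X$. An orbit of $x$ under $F$ is a sequence $(x_j)_{j=0}^\infty$ with $x_0=x$, $x_{j+1}\in F(x_j)$. The inverse limit is $\varprojlim F=\{(x_0,x_1,x_2,\dots)\in X^{\mathbb{N}}: x_i\in F(x_{i+1})\text{ for all } i\}$, a subspace of the product $X^{\mathbb{N}}$ (with any compatible metric, e.g. $\sum_i 2^{-i}\min(1,d(x_i,y_i))$), and $\sigma(x_0,x_1,\dots)=(x_1,x_2,\dots)$. A set-valued $F$ has the specification property if for every $\epsilon>0$ there is $M\in\mathbb{N}$ such that for any $n$, any $x^1,\dots,x^n\in X$, any integers $0\le a_1\le b_1<a_2\le\dots<a_n\le b_n$ with $a_{i+1}-b_i>M$, any orbits $(x^i_j)_{j=0}^\infty$ of the $x^i$, and any $P>M+b_n-a_1$, there is $z\in X$ with an orbit $(z_j)_{j=0}^\infty$ with $d(z_j,x^i_j)<\epsilon$ for $1\le i\le n$, $a_i\le j\le b_i$, and $z_P=z$. For a single-valued continuous map $\sigma$ this means (orbits being unique): for every $\epsilon>0$ there is $M$ such that for any points $x^1,\dots,x^n$, any such $a_i,b_i$ with $a_{i+1}-b_i>M$, and any $P>M+b_n-a_1$, there is $z$ with $d(\sigma^j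 z,\sigma^j x^i)<\epsilon$ for $a_i\le j\le b_i$ and $\sigma^P z=z$. *)

theory Defs
  imports "HOL-Analysis.Analysis"
begin

definition usc_setvalued :: "'a::metric_space set \<Rightarrow> ('a \<Rightarrow> 'a set) \<Rightarrow> bool" where
  "usc_setvalued X F \<longleftrightarrow>
     (\<forall>x\<in>X. F x \<noteq> {} \<and> F x \<subseteq> X \<and> closed (F x)) \<and>
     (\<forall>x\<in>X. \<forall>U. open U \<and> F x \<subseteq> U \<longrightarrow>
        (\<exists>V. open V \<and> x \<in> V \<and> (\<forall>y\<in>X \<inter> V. F y \<subseteq> U)))"

definition is_orbit :: "('a \<Rightarrow> 'a set) \<Rightarrow> 'a \<Rightarrow> (nat \<Rightarrow> 'a) \<Rightarrow> bool" where
  "is_orbit F x s \<longleftrightarrow> s 0 = x \<and> (\<forall>j. s (Suc j) \<in> F (s j))"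

definition setvalued_spec :: "'a::metric_space set \<Rightarrow> ('a \<Rightarrow> 'a set) \<Rightarrow> bool" where
  "setvalued_spec X F \<longleftrightarrow>
     (\<forall>\<epsilon>>0. \<exists>M::nat. \<forall>(n::nat) (a::nat\<Rightarrow>nat) (b::nat\<Rightarrow>nat) (orb::nat\<Rightarrow>nat\<Rightarrow>'a) (P::nat).
        n \<ge> 1 \<and>
        (\<forall>i\<in>{1..n}. orb i 0 \<in> X \<and> is_orbit F (orb i 0) (orb i)) \<and>
        (\<forall>i\<in>{1..n}. a i \<le> b i) \<and>
        (\<forall>i\<in>{1..<n}. a (Suc i) > b i + M) \<and>
        P > M + (b n - a 1)
        \<longrightarrow> (\<exists>z\<in>X. \<exists>zs. is_orbit F z zs \<and>
               (\<forall>i\<in>{1..n}. \<forall>j\<in>{a i..b i}. dist (zs j) (orb i j) < \<epsilon>) \<and>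
               zs P = z))"

definition map_spec :: "'b set \<Rightarrow> ('b \<Rightarrow> 'b \<Rightarrow> real) \<Rightarrow> ('b \<Rightarrow> 'b) \<Rightarrow> bool" where
  "map_spec Y d f \<longleftrightarrow>
     (\<forall>\<epsilon>>0. \<exists>M::nat. \<forall>(n::nat) (a::nat\<Rightarrow>nat) (b::nat\<Rightarrow>nat) (pts::nat\<Rightarrow>'b) (P::nat).
        n \<ge> 1 \<and>
        (\<forall>i\<in>{1..n}. pts i \<in> Y) \<and>
        (\<forall>i\<in>{1..n}. a i \<le> b i) \<and>
        (\<forall>i\<in>{1..<n}. a (Suc i) > b i + M) \<and>
        P > M + (b n - a 1)
        \<longrightarrow> (\<exists>z\<in>Y.
               (\<forall>i\<in>{1..n}. \<forall>j\<in>{a i..b i}. d ((f ^^ j) z) ((f ^^ j) (pts i)) < \<epsilon>) \<and>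
               (f ^^ P) z = z))"

definition invlim :: "'a set \<Rightarrow> ('a \<Rightarrow> 'a set) \<Rightarrow> (nat \<Rightarrow> 'a) set" where
  "invlim X F = {x. (\<forall>i. x i \<in> X) \<and> (\<forall>i. x i \<in> F (x (Suc i)))}"

definition invlim_dist :: "(nat \<Rightarrow> 'a::metric_space) \<Rightarrow> (nat \<Rightarrow> 'a) \<Rightarrow> real" where
  "invlim_dist x y = (\<Sum>i. (1/2)^i * min 1 (dist (x i) (y i)))"

definition shift :: "(nat \<Rightarrow> 'a) \<Rightarrow> (nat \<Rightarrow> 'a)" where
  "shift x = (\<lambda>i. x (Suc i))"

end

theory Submission imports Defs begin

text \<open>The specification property of F is applied to time-reversed windows: each point of the inverse
  limit, read backwards from a time T beyond all windows and continued forward by arbitrary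
  choices, is an orbit of F. The resulting periodic orbit of period P, read backwards and
  wrapped around modulo P, is a periodic point of the shift, and agreement on K coordinates
  beyond each time bounds the product metric up to the geometric tail.\<close>

definition admissible_windows :: "nat \<Rightarrow> (nat \<Rightarrow> nat) \<Rightarrow> (nat \<Rightarrow> nat) \<Rightarrow> nat \<Rightarrow> nat \<Rightarrow> bool" where
  "admissible_windows n a b M P \<longleftrightarrow>
     1 \<le> n \<and> (\<forall>i\<in>{1..n}. a i \<le> b i) \<and> (\<forall>i\<in>{1..<n}. a (Suc i) > b i + M) \<and>
     P > M + (b n - a 1)"

definition setvalued_spec_gap :: "'a::metric_space set \<Rightarrow> ('a \<Rightarrow> 'a set) \<Rightarrow> real \<Rightarrow> nat \<Rightarrow> bool" where
  "setvalued_spec_gap X F \<epsilon> M \<longleftrightarrow>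
     (\<forall>n a b orb P. admissible_windows n a b M P \<longrightarrow>
        (\<forall>i\<in>{1..n}. orb i 0 \<in> X \<and> is_orbit F (orb i 0) (orb i)) \<longrightarrow>
        (\<exists>z\<in>X. \<exists>zs. is_orbit F z zs \<and>
           (\<forall>i\<in>{1..n}. \<forall>j\<in>{a i..b i}. dist (zs j) (orb i j) < \<epsilon>) \<and> zs P = z))"

definition map_spec_gap :: "'b set \<Rightarrow> ('b \<Rightarrow> 'b \<Rightarrow> real) \<Rightarrow> ('b \<Rightarrow> 'b) \<Rightarrow> real \<Rightarrow> nat \<Rightarrow> bool" where
  "map_spec_gap Y d f \<epsilon> M \<longleftrightarrow>
     (\<forall>n a b pts P. admissible_windows n a b M P \<longrightarrow> (\<forall>i\<in>{1..n}. pts i \<in> Y) \<longrightarrow>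
        (\<exists>z\<in>Y. (\<forall>i\<in>{1..n}. \<forall>j\<in>{a i..b i}. d ((f ^^ j) z) ((f ^^ j) (pts i)) < \<epsilon>) \<and>
           (f ^^ P) z = z))"

lemma setvalued_specD: "setvalued_spec X F \<Longrightarrow> \<epsilon> > 0 \<Longrightarrow> \<exists>M. setvalued_spec_gap X F \<epsilon> M"
  unfolding setvalued_spec_def setvalued_spec_gap_def admissible_windows_def by metis

lemma map_specI: "(\<And>\<epsilon>. \<epsilon> > 0 \<Longrightarrow> \<exists>M. map_spec_gap Y d f \<epsilon> M) \<Longrightarrow> map_spec Y d f"
  unfolding map_spec_def map_spec_gap_def admissible_windows_def by metis

lemma admissible_windows_mono:
  assumes "admissible_windows n a b M P" and "1 \<le> i" "i \<le> k" "k \<le> n"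
  shows "a i \<le> a k \<and> b i \<le> b k"
  using assms(3,4)
proof (induction k)
  case 0
  then show ?case using assms(2) by simp
next
  case (Suc k)
  show ?case
  proof (cases "i = Suc k")
    case False
    then have "i \<le> k" using Suc.prems by simp
    moreover have "a k \<le> b k" "a (Suc k) \<le> b (Suc k)" "a (Suc k) > b k + M"
      using assms(1,2) Suc.prems \<open>i \<le> k\<close> unfolding admissible_windows_def by auto
    ultimately show ?thesis using Suc by linarith
  qed simp
qed

lemma admissible_windows_reverse:
  assumes "admissible_windows n a b (M + K) P"
  shows "admissible_windows n (\<lambda>i. b n - b (n + 1 - i)) (\<lambda>i. b n + K - a (n + 1 - i)) M P"
proof -
  have ab: "a i \<le> b i" and bn: "b i \<le> b n" if "i \<in> {1..n}" for i
    using that assms admissible_windows_mono[OF assms, of i n]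
    unfolding admissible_windows_def by auto
  have gap: "b i + (M + K) < a (Suc i)" if "i \<in> {1..<n}" for i
    using that assms unfolding admissible_windows_def by auto
  have gap': "b n + K - a (n + 1 - i) + M < b n - b (n + 1 - Suc i)" if "i \<in> {1..<n}" for i
  proof -
    have "n - i \<in> {1..<n}" "n + 1 - i = Suc (n - i)" using that by auto
    then show ?thesis
      using gap[of "n - i"] ab[of "Suc (n - i)"] bn[of "Suc (n - i)"] by (simp; arith)
  qed
  have ab': "b n - b (n + 1 - i) \<le> b n + K - a (n + 1 - i)" if "i \<in> {1..n}" for i
  proof -
    have "n + 1 - i \<in> {1..n}" using that by auto
    then show ?thesis using ab[of "n + 1 - i"] bn[of "n + 1 - i"] by linarith
  qed
  have period: "M + (b n + K - a 1) < P"
  proof -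
    have "a 1 \<le> b n"
      using assms ab[of 1] bn[of 1] unfolding admissible_windows_def by fastforce
    then show ?thesis using assms unfolding admissible_windows_def by linarith
  qed
  show ?thesis
    unfolding admissible_windows_def
  proof (intro conjI ballI)
    show "1 \<le> n" using assms unfolding admissible_windows_def by simp
    show "M + ((b n + K - a (n + 1 - n)) - (b n - b (n + 1 - 1))) < P" using period by simp
  qed (use ab' gap' in auto)
qed

primrec choice_orbit :: "('a \<Rightarrow> 'a set) \<Rightarrow> 'a \<Rightarrow> nat \<Rightarrow> 'a" where
  "choice_orbit F x 0 = x"
| "choice_orbit F x (Suc j) = (SOME y. y \<in> F (choice_orbit F x j))"

lemma choice_orbit_step:
  assumes F: "\<And>x. x \<in> X \<Longrightarrow> F x \<noteq> {} \<and> F x \<subseteq> X" and "x \<in> X"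
  shows "choice_orbit F x j \<in> X \<and> choice_orbit F x (Suc j) \<in> F (choice_orbit F x j)"
proof (induction j)
  case 0
  then show ?case using F[of x] \<open>x \<in> X\<close> by (simp add: some_in_eq)
next
  case (Suc j)
  then have "choice_orbit F x (Suc j) \<in> X" using F by blast
  moreover have "F (choice_orbit F x (Suc j)) \<noteq> {}" using F calculation by blast
  ultimately show ?case by (simp add: some_in_eq)
qed

definition reverse_orbit :: "('a \<Rightarrow> 'a set) \<Rightarrow> (nat \<Rightarrow> 'a) \<Rightarrow> nat \<Rightarrow> nat \<Rightarrow> 'a" where
  "reverse_orbit F x T t = (if t \<le> T then x (T - t) else choice_orbit F (x 0) (t - T))"

lemma reverse_orbit_is_orbit:
  assumes F: "\<And>x. x \<in> X \<Longrightarrow> F x \<noteq> {} \<and> F x \<subseteq> X" and x: "x \<in> invlim X F"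
  shows "reverse_orbit F x T 0 \<in> X \<and> is_orbit F (reverse_orbit F x T 0) (reverse_orbit F x T)"
proof -
  have "reverse_orbit F x T (Suc t) \<in> F (reverse_orbit F x T t)" for t
  proof (cases "Suc t \<le> T")
    case True
    then have "T - t = Suc (T - Suc t)" by simp
    then show ?thesis using True x unfolding reverse_orbit_def invlim_def by simp
  next
    case False
    then have "Suc t - T = Suc (t - T)" by simp
    then show ?thesis
      using False choice_orbit_step[of X F "x 0" "t - T"] F x
      unfolding reverse_orbit_def invlim_def by auto
  qed
  then show ?thesis using x unfolding is_orbit_def reverse_orbit_def invlim_def by simp
qed

lemma orbit_in_domain:
  assumes "\<And>x. x \<in> X \<Longrightarrow> F x \<subseteq> X" and "z \<in> X" and "is_orbit F z zs"
  shows "zs j \<in> X"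
  using assms unfolding is_orbit_def by (induction j) auto

lemma periodic_orbit_step:
  assumes o: "is_orbit F z zs" and "zs P = z" "P > 0"
  shows "zs (Suc u mod P) \<in> F (zs (u mod P))"
proof (cases "Suc (u mod P) = P")
  case True
  then have "Suc u mod P = 0" by (simp add: mod_Suc)
  then have "zs (Suc u mod P) = zs (Suc (u mod P))"
    using o True assms(2) unfolding is_orbit_def by simp
  then show ?thesis using o unfolding is_orbit_def by simp
next
  case False
  then show ?thesis using o by (simp add: mod_Suc is_orbit_def)
qed

text \<open>Coordinate m is the orbit at time T - m modulo P; adding (P - 1) * m instead of
  subtracting m avoids truncated subtraction.\<close>
definition wrap_orbit :: "(nat \<Rightarrow> 'a) \<Rightarrow> nat \<Rightarrow> nat \<Rightarrow> nat \<Rightarrow> 'a" where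
  "wrap_orbit zs P T m = zs ((T + (P - 1) * m) mod P)"

lemma wrap_orbit_eq:
  assumes "m \<le> T" "T - m < P"
  shows "wrap_orbit zs P T m = zs (T - m)"
proof -
  have "T + (P - 1) * m = (T - m) + P * m" using assms by (cases P) auto
  then have "(T + (P - 1) * m) mod P = (T - m) mod P" by (simp only: mod_mult_self2)
  then show ?thesis using assms unfolding wrap_orbit_def by simp
qed

lemma wrap_orbit_in_invlim:
  assumes "\<And>x. x \<in> X \<Longrightarrow> F x \<subseteq> X" and "z \<in> X" "is_orbit F z zs" "zs P = z" "P > 0"
  shows "wrap_orbit zs P T \<in> invlim X F"
  unfolding invlim_def
proof (intro CollectI conjI allI)
  fix m
  show "wrap_orbit zs P T m \<in> X"
    unfolding wrap_orbit_def by (rule orbit_in_domain[OF _ assms(2,3)]) (rule assms(1))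
  have "Suc (T + (P - 1) * Suc m) = T + (P - 1) * m + P" using \<open>P > 0\<close> by (cases P) auto
  then have "Suc (T + (P - 1) * Suc m) mod P = (T + (P - 1) * m) mod P" by (simp only: mod_add_self2)
  then show "wrap_orbit zs P T m \<in> F (wrap_orbit zs P T (Suc m))"
    using periodic_orbit_step[OF assms(3-5), of "T + (P - 1) * Suc m"]
    unfolding wrap_orbit_def by simp
qed

lemma funpow_shift: "(shift ^^ j) x = (\<lambda>k. x (k + j))"
  by (induction j) (auto simp: shift_def)

lemma funpow_shift_wrap_orbit: "(shift ^^ P) (wrap_orbit zs P T) = wrap_orbit zs P T"
proof -
  have "(T + (P - 1) * (k + P)) mod P = (T + (P - 1) * k) mod P" for k
    by (simp only: distrib_left add.assoc [symmetric] mod_mult_self1)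
  then show ?thesis unfolding funpow_shift wrap_orbit_def by (simp only:)
qed

lemma invlim_dist_le:
  fixes x y :: "nat \<Rightarrow> 'a::metric_space"
  assumes "\<And>k. k \<le> K \<Longrightarrow> dist (x k) (y k) \<le> e"
  shows "invlim_dist x y \<le> 2 * e + (1/2) ^ K"
proof -
  let ?f = "\<lambda>i. (1/2::real) ^ i * min 1 (dist (x i) (y i))"
  have geo: "summable (\<lambda>i. (1/2::real) ^ i)" "(\<Sum>i. (1/2::real) ^ i) = 2"
    using summable_geometric[of "1/2::real"] suminf_geometric[of "1/2::real"] by simp_all
  have le: "?f i \<le> (1/2) ^ i" for i by (simp add: mult_left_le)
  have sf: "summable ?f"
    by (rule summable_comparison_test'[OF geo(1), of 0]) (use le in auto)
  have "(\<Sum>i. ?f (i + Suc K)) \<le> (\<Sum>i. (1/2::real) ^ (i + Suc K))"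
    by (intro suminf_le summable_ignore_initial_segment sf geo(1) le)
  also have "\<dots> = (\<Sum>i. (1/2::real) ^ Suc K * (1/2) ^ i)" by (simp add: power_add mult.commute)
  also have "\<dots> = (1/2) ^ Suc K * 2" by (simp only: suminf_mult[OF geo(1)] geo(2))
  also have "\<dots> = (1/2) ^ K" by simp
  finally have tail: "(\<Sum>i. ?f (i + Suc K)) \<le> (1/2) ^ K" .
  have "sum ?f {..<Suc K} \<le> (\<Sum>i<Suc K. e * (1/2) ^ i)"
    using assms
    by (intro sum_mono) (auto simp: mult.commute less_Suc_eq_le intro!: mult_left_mono min.coboundedI2)
  also have "\<dots> \<le> e * 2"
  proof -
    have "(\<Sum>i<Suc K. (1/2::real) ^ i) \<le> 2"
      using sum_le_suminf[OF geo(1), of "{..<Suc K}"] geo(2) by simp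
    moreover have "e \<ge> 0" using assms[of 0] zero_le_dist order_trans by blast
    ultimately show ?thesis by (simp add: sum_distrib_left[symmetric] mult_left_mono)
  qed
  finally show ?thesis
    using suminf_split_initial_segment[OF sf, of "Suc K"] tail
    unfolding invlim_dist_def by linarith
qed

lemma invlim_dist_funpow_shift_less:
  fixes x y :: "nat \<Rightarrow> 'a::metric_space"
  assumes "(1/2::real) ^ K < \<epsilon>/2" and "\<And>k. k \<le> K \<Longrightarrow> dist (x (k + j)) (y (k + j)) < \<epsilon>/4"
  shows "invlim_dist ((shift ^^ j) x) ((shift ^^ j) y) < \<epsilon>"
proof -
  have "invlim_dist (\<lambda>k. x (k + j)) (\<lambda>k. y (k + j)) \<le> 2 * (\<epsilon>/4) + (1/2) ^ K"
    by (rule invlim_dist_le) (use assms(2) in fastforce)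
  then show ?thesis using assms(1) unfolding funpow_shift by simp
qed

lemma invlim_periodic_shadowing:
  assumes F: "\<And>x. x \<in> X \<Longrightarrow> F x \<noteq> {} \<and> F x \<subseteq> X"
    and M: "setvalued_spec_gap X F \<delta> M"
    and W: "admissible_windows n a b (M + K) P"
    and pts: "\<forall>i\<in>{1..n}. pts i \<in> invlim X F"
  obtains w where "w \<in> invlim X F" "(shift ^^ P) w = w"
    "\<And>i j k. i \<in> {1..n} \<Longrightarrow> j \<in> {a i..b i} \<Longrightarrow> k \<le> K \<Longrightarrow> dist (w (k + j)) (pts i (k + j)) < \<delta>"
proof -
  define T where "T = b n + K"
  define orb where "orb i = reverse_orbit F (pts (n + 1 - i)) T" for i
  have "orb i 0 \<in> X \<and> is_orbit F (orb i 0) (orb i)" if "i \<in> {1..n}" for i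
  proof -
    have "n + 1 - i \<in> {1..n}" using that by auto
    then show ?thesis unfolding orb_def using reverse_orbit_is_orbit[of X F, OF F] pts by blast
  qed
  then obtain z zs where z: "z \<in> X" "is_orbit F z zs" "zs P = z"
    and close: "\<forall>i\<in>{1..n}. \<forall>t\<in>{b n - b (n + 1 - i)..b n + K - a (n + 1 - i)}.
        dist (zs t) (orb i t) < \<delta>"
    using M admissible_windows_reverse[OF W] unfolding setvalued_spec_gap_def by blast
  have "dist (wrap_orbit zs P T (k + j)) (pts i (k + j)) < \<delta>"
    if "i \<in> {1..n}" "j \<in> {a i..b i}" "k \<le> K" for i j k
  proof -
    have "a 1 \<le> a i" "b i \<le> b n" "P > M + K + (b n - a 1)"
      using admissible_windows_mono[OF W, of 1 i] admissible_windows_mono[OF W, of i n] that W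
      unfolding admissible_windows_def by auto
    then have t: "n + 1 - i \<in> {1..n}" "k + j \<le> T" "T - (k + j) < P"
      "T - (k + j) \<in> {b n - b (n + 1 - (n + 1 - i))..b n + K - a (n + 1 - (n + 1 - i))}"
      using that unfolding T_def by (auto simp: Suc_diff_le)
    then have "dist (zs (T - (k + j))) (orb (n + 1 - i) (T - (k + j))) < \<delta>"
      using close by blast
    moreover have "orb (n + 1 - i) (T - (k + j)) = pts i (k + j)"
      using t that unfolding orb_def reverse_orbit_def by (simp add: Suc_diff_le)
    ultimately show ?thesis using wrap_orbit_eq[OF t(2,3), of zs] by simp
  qed
  moreover have "P > 0" using W unfolding admissible_windows_def by auto
  then have "wrap_orbit zs P T \<in> invlim X F"
    by (intro wrap_orbit_in_invlim[OF _ z]) (use F in blast)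
  ultimately show ?thesis using that funpow_shift_wrap_orbit by blast
qed

theorem theorem7:
  fixes X :: "'a::metric_space set" and F :: "'a \<Rightarrow> 'a set"
  assumes "compact X"
    and "usc_setvalued X F"
    and "setvalued_spec X F"
  shows "map_spec (invlim X F) invlim_dist shift"
proof (rule map_specI)
  fix \<epsilon> :: real assume "\<epsilon> > 0"
  have F: "\<And>x. x \<in> X \<Longrightarrow> F x \<noteq> {} \<and> F x \<subseteq> X"
    using assms(2) unfolding usc_setvalued_def by blast
  obtain K where K: "(1/2::real) ^ K < \<epsilon>/2"
    using real_arch_pow_inv[of "\<epsilon>/2" "1/2::real"] \<open>\<epsilon> > 0\<close> by auto
  obtain M where M: "setvalued_spec_gap X F (\<epsilon>/4) M"
    using setvalued_specD[OF assms(3)] \<open>\<epsilon> > 0\<close> by fastforce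
  have "map_spec_gap (invlim X F) invlim_dist shift \<epsilon> (M + K)"
    unfolding map_spec_gap_def
  proof (intro allI impI)
    fix n a b pts P
    assume "admissible_windows n a b (M + K) P" "\<forall>i\<in>{1..n}. pts i \<in> invlim X F"
    then obtain w where w: "w \<in> invlim X F" "(shift ^^ P) w = w"
      and near: "\<And>i j k. i \<in> {1..n} \<Longrightarrow> j \<in> {a i..b i} \<Longrightarrow> k \<le> K \<Longrightarrow>
          dist (w (k + j)) (pts i (k + j)) < \<epsilon>/4"
      using invlim_periodic_shadowing[OF F M] by metis
    have "invlim_dist ((shift ^^ j) w) ((shift ^^ j) (pts i)) < \<epsilon>"
      if "i \<in> {1..n}" "j \<in> {a i..b i}" for i j
      by (rule invlim_dist_funpow_shift_less[OF K]) (rule near[OF that])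
    then show "\<exists>w\<in>invlim X F. (\<forall>i\<in>{1..n}. \<forall>j\<in>{a i..b i}.
          invlim_dist ((shift ^^ j) w) ((shift ^^ j) (pts i)) < \<epsilon>) \<and> (shift ^^ P) w = w"
      using w by blast
  qed
  then show "\<exists>M. map_spec_gap (invlim X F) invlim_dist shift \<epsilon> M" ..
qed

end
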